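(* The smallest order $n$ for which there exists a pair of unbiased weighing matrices of order $n$ and weight $9$ is $n=13$.
   Context: A weighing matrix of order $n$ and weight $k$ is an $n\times n$ matrix $W$ with entries in $\{1,-1,0\}$ such that $WW^T=kI_n$. Two weighing matrices $W_1,W_2$ of order $n$ and weight $k$ are unbiased if $\frac{1}{\sqrt{k}}W_1W_2^T$ is also a weighing matrix of order $n$ and weight $k$. *)

theory Defs
  imports Complex_Main
begin

text \<open>An n x n matrix is represented as a function nat => nat => real,
  only the entries with indices i, j < n being relevant.\<close>

definition weighing_matrix :: "nat \<Rightarrow> nat \<Rightarrow> (nat \<Rightarrow> nat \<Rightarrow> real) \<Rightarrow> bool" where
  "weighing_matrix n k W \<longleftrightarrow>
     (\<forall>i<n. \<forall>j<n. W i j \<in> {1, -1, 0}) \<and>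
     (\<forall>i<n. \<forall>j<n. (\<Sum>l<n. W i l * W j l) = (if i = j then real k else 0))"

definition unbiased :: "nat \<Rightarrow> nat \<Rightarrow> (nat \<Rightarrow> nat \<Rightarrow> real) \<Rightarrow> (nat \<Rightarrow> nat \<Rightarrow> real) \<Rightarrow> bool" where
  "unbiased n k W1 W2 \<longleftrightarrow>
     weighing_matrix n k W1 \<and> weighing_matrix n k W2 \<and>
     weighing_matrix n k (\<lambda>i j. (1 / sqrt (real k)) * (\<Sum>l<n. W1 i l * W2 j l))"

end

theory Submission
  imports Defs "Jordan_Normal_Form.Determinant"
begin

(* Existence: two circulant matrices of order 13 whose products are checked by computation.

   Non-existence: for rows r, s of weighing matrices of weight k, the integer r . s has the parity
   of n + |Z(r) \<inter> Z(s)|, where Z denotes the set of zero positions, because both supports have k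
   elements. For odd n, orthogonality then makes every row meet the zeros of the first row, so the
   n rows are covered by the n - k zero sets of the columns through those zeros: n \<le> (n - k)^2.
   For even n and k = 9 = 3^2, unbiasedness makes each row of W1 meet the zeros of exactly 9 rows
   of W2 in an odd number of points, while double counting gives (n - 9)^2 common zeros in total;
   hence n = 12 and all these intersections have at most one point. For n = 12 the zero sets form
   3-sets with three through each point and pairwise even intersections; sharing a block is then
   transitive and every point lies in a 4-clique. The neighbourhoods in the second system of the
   points of a 4-clique of the first are disjoint sets of at least 4 points, which would need
   16 > 12 points. *)

lemma Collect_less_Suc:
  "{l. l < Suc n \<and> P l} = (if P n then insert n {l. l < n \<and> P l} else {l. l < n \<and> P l})"
  by (auto simp: less_Suc_eq)

lemma sum_square_ternary:
  fixes f :: "nat \<Rightarrow> real"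
  assumes "\<And>l. l < n \<Longrightarrow> f l \<in> {1, -1, 0}"
  shows "(\<Sum>l<n. f l * f l) = real (card {l. l < n \<and> f l \<noteq> 0})"
proof -
  have "(\<Sum>l<n. f l * f l) = (\<Sum>l<n. if f l \<noteq> 0 then 1 else 0)"
    by (rule sum.cong) (use assms in fastforce)+
  also have "\<dots> = real (card {l. l < n \<and> f l \<noteq> 0})"
    by (simp add: sum.If_cases Int_def)
  finally show ?thesis .
qed

lemma sum_product_ternary_parity:
  fixes f g :: "nat \<Rightarrow> real"
  assumes "\<And>l. l < n \<Longrightarrow> f l \<in> {1, -1, 0}" and "\<And>l. l < n \<Longrightarrow> g l \<in> {1, -1, 0}"
  shows "\<exists>s::int. (\<Sum>l<n. f l * g l) = of_int s \<and>
           (even s \<longleftrightarrow> even (card {l. l < n \<and> f l \<noteq> 0 \<and> g l \<noteq> 0}))"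
  using assms
proof (induction n)
  case 0
  show ?case by (intro exI[of _ 0]) simp
next
  case (Suc n)
  have "\<exists>s::int. (\<Sum>l<n. f l * g l) = of_int s \<and>
          (even s \<longleftrightarrow> even (card {l. l < n \<and> f l \<noteq> 0 \<and> g l \<noteq> 0}))"
    by (rule Suc.IH) (use Suc.prems in auto)
  then obtain s :: int where s: "(\<Sum>l<n. f l * g l) = of_int s"
    "even s \<longleftrightarrow> even (card {l. l < n \<and> f l \<noteq> 0 \<and> g l \<noteq> 0})"
    by blast
  have "f n \<in> {1, -1, 0}" "g n \<in> {1, -1, 0}" using Suc.prems by auto
  then consider "f n * g n = 1" | "f n * g n = -1" | "f n = 0 \<or> g n = 0" by auto
  then show ?case
  proof cases
    case 1
    then show ?thesis using s by (intro exI[of _ "s + 1"]) (auto simp: Collect_less_Suc)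
  next
    case 2
    then show ?thesis using s by (intro exI[of _ "s - 1"]) (auto simp: Collect_less_Suc)
  next
    case 3
    then show ?thesis using s by (intro exI[of _ s]) (auto simp: Collect_less_Suc)
  qed
qed

lemma card_Int_add_card_Compl:
  assumes "A \<subseteq> {..<n}" and "B \<subseteq> {..<n}"
  shows "card (A \<inter> B) + n = card A + card B + card ({..<n} - (A \<union> B))"
proof -
  have fin: "finite A" "finite B" using assms finite_subset by blast+
  have "card ({..<n} - (A \<union> B)) = n - card (A \<union> B)"
    using assms fin by (subst card_Diff_subset) auto
  moreover have "card (A \<union> B) \<le> n"
    using assms by (metis card_lessThan card_mono finite_lessThan le_sup_iff)
  ultimately show ?thesis using card_Un_Int[OF fin] by linarith
qed

lemma card_odd_le_sum:
  fixes c :: "'a \<Rightarrow> nat"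
  assumes "finite B"
  shows "card {b \<in> B. odd (c b)} \<le> (\<Sum>b\<in>B. c b)"
proof -
  have "card {b \<in> B. odd (c b)} = (\<Sum>b\<in>{b \<in> B. odd (c b)}. 1)" by simp
  also have "\<dots> \<le> (\<Sum>b\<in>{b \<in> B. odd (c b)}. c b)" by (rule sum_mono) (simp add: Suc_le_eq odd_pos)
  also have "\<dots> \<le> (\<Sum>b\<in>B. c b)" using assms by (intro sum_mono2) auto
  finally show ?thesis .
qed

lemma card_odd_add_two_le_sum:
  fixes c :: "'a \<Rightarrow> nat"
  assumes B: "finite B" and b0: "b0 \<in> B" and c0: "2 \<le> c b0"
  shows "card {b \<in> B. odd (c b)} + 2 \<le> (\<Sum>b\<in>B. c b)"
proof -
  let ?odd = "{b \<in> B - {b0}. odd (c b)}"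
  have "card {b \<in> B. odd (c b)} + 2 \<le> card ?odd + c b0"
  proof (cases "odd (c b0)")
    case True
    then have "{b \<in> B. odd (c b)} = insert b0 ?odd" and "3 \<le> c b0"
      using b0 c0 by (auto elim: oddE)
    then show ?thesis using B by simp
  next
    case False
    then have "{b \<in> B. odd (c b)} = ?odd" by auto
    then show ?thesis using c0 by simp
  qed
  also have "\<dots> \<le> (\<Sum>b\<in>B - {b0}. c b) + c b0"
    using card_odd_le_sum[of "B - {b0}" c] B by simp
  also have "\<dots> = (\<Sum>b\<in>B. c b)" using B b0 by (simp add: sum.remove)
  finally show ?thesis .
qed

lemma card_3_third:
  assumes "card A = 3" and "x \<in> A" and "y \<in> A"
  shows "\<exists>z\<in>A. z \<noteq> x \<and> z \<noteq> y"
  using assms by (auto simp: card_3_iff)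

lemma card_3_eq_with_two:
  assumes "card A = 3" and "x \<in> A" and "y \<in> A" and "x \<noteq> y"
  shows "\<exists>z. A = {x, y, z} \<and> z \<noteq> x \<and> z \<noteq> y"
  using assms by (auto simp: card_3_iff)

lemma card_3_eq_with_one:
  assumes "card A = 3" and "x \<in> A"
  shows "\<exists>y z. A = {x, y, z} \<and> y \<noteq> x \<and> z \<noteq> x \<and> y \<noteq> z"
proof -
  obtain y where y: "y \<in> A" "y \<noteq> x" using card_3_third[OF assms assms(2)] by blast
  then obtain z where "A = {x, y, z}" "z \<noteq> x" "z \<noteq> y"
    using card_3_eq_with_two[OF assms y(1)] by blast
  then show ?thesis using y(2) by blast
qed

lemma card_3_eq_of_subset:
  assumes "card A = 3" and "{x, y, z} \<subseteq> A" and "x \<noteq> y" "x \<noteq> z" "y \<noteq> z"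
  shows "A = {x, y, z}"
  using assms by (auto simp: card_3_iff)

definition row_zeros :: "nat \<Rightarrow> (nat \<Rightarrow> nat \<Rightarrow> real) \<Rightarrow> nat \<Rightarrow> nat set" where
  "row_zeros n W i = {j. j < n \<and> W i j = 0}"

lemma row_zeros_subset: "row_zeros n W i \<subseteq> {..<n}"
  by (auto simp: row_zeros_def)

lemma finite_row_zeros [simp]: "finite (row_zeros n W i)"
  using finite_subset[OF row_zeros_subset] by blast

lemma weighing_matrix_entry:
  "weighing_matrix n k W \<Longrightarrow> i < n \<Longrightarrow> j < n \<Longrightarrow> W i j \<in> {1, -1, 0}"
  by (simp add: weighing_matrix_def)

lemma weighing_matrix_row_weight:
  assumes W: "weighing_matrix n k W" and i: "i < n"
  shows "card {j. j < n \<and> W i j \<noteq> 0} = k"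
proof -
  have "real k = (\<Sum>j<n. W i j * W i j)" using W i by (simp add: weighing_matrix_def)
  also have "\<dots> = real (card {j. j < n \<and> W i j \<noteq> 0})"
    by (rule sum_square_ternary) (rule weighing_matrix_entry[OF W i])
  finally show ?thesis by simp
qed

lemma card_row_zeros:
  assumes "weighing_matrix n k W" and "i < n"
  shows "card (row_zeros n W i) = n - k"
proof -
  have "row_zeros n W i = {..<n} - {j. j < n \<and> W i j \<noteq> 0}" by (auto simp: row_zeros_def)
  then show ?thesis
    using weighing_matrix_row_weight[OF assms] by (simp add: card_Diff_subset subset_iff)
qed

lemma weighing_matrix_transpose:
  assumes W: "weighing_matrix n k W" and k: "0 < k"
  shows "weighing_matrix n k (\<lambda>i j. W j i)"
proof -
  define A where "A = mat n n (\<lambda>(i, j). W i j)"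
  define B where "B = (1 / real k) \<cdot>\<^sub>m transpose_mat A"
  have A: "A \<in> carrier_mat n n" and B: "B \<in> carrier_mat n n" unfolding A_def B_def by auto
  have "A * B = 1\<^sub>m n"
  proof (rule eq_matI)
    fix i j assume ij: "i < dim_row (1\<^sub>m n)" "j < dim_col (1\<^sub>m n)"
    then have "(A * B) $$ (i, j) = (1 / real k) * (\<Sum>l<n. W i l * W j l)"
      unfolding A_def B_def
      by (auto simp: scalar_prod_def atLeast0LessThan sum_distrib_left intro!: sum.cong)
    also have "\<dots> = 1\<^sub>m n $$ (i, j)" using W ij k by (auto simp: weighing_matrix_def)
    finally show "(A * B) $$ (i, j) = 1\<^sub>m n $$ (i, j)" .
  qed (auto simp: A_def B_def)
  then have BA: "B * A = 1\<^sub>m n" by (rule mat_mult_left_right_inverse[OF A B])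
  have "(\<Sum>l<n. W l i * W l j) = (if i = j then real k else 0)" if "i < n" "j < n" for i j
  proof -
    have "(B * A) $$ (i, j) = (1 / real k) * (\<Sum>l<n. W l i * W l j)"
      using that unfolding A_def B_def
      by (auto simp: scalar_prod_def atLeast0LessThan sum_distrib_left intro!: sum.cong)
    then show ?thesis using BA that k by (auto simp: field_simps)
  qed
  then show ?thesis using W by (auto simp: weighing_matrix_def)
qed

lemma card_col_zeros:
  assumes "weighing_matrix n k W" and "0 < k" and "j < n"
  shows "card {i. i < n \<and> W i j = 0} = n - k"
  using card_row_zeros[OF weighing_matrix_transpose[OF assms(1,2)] assms(3)]
  by (simp add: row_zeros_def)

lemma row_product_parity:
  assumes W1: "weighing_matrix n k W1" and W2: "weighing_matrix n k W2"
    and i: "i < n" and j: "j < n"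
  shows "\<exists>s::int. (\<Sum>l<n. W1 i l * W2 j l) = of_int s \<and>
           (even s \<longleftrightarrow> even (n + card (row_zeros n W1 i \<inter> row_zeros n W2 j)))"
proof -
  define S1 where "S1 = {l. l < n \<and> W1 i l \<noteq> 0}"
  define S2 where "S2 = {l. l < n \<and> W2 j l \<noteq> 0}"
  have "{l. l < n \<and> W1 i l \<noteq> 0 \<and> W2 j l \<noteq> 0} = S1 \<inter> S2" by (auto simp: S1_def S2_def)
  then obtain s :: int where s: "(\<Sum>l<n. W1 i l * W2 j l) = of_int s" "even s \<longleftrightarrow> even (card (S1 \<inter> S2))"
    using sum_product_ternary_parity[of n "W1 i" "W2 j", OF weighing_matrix_entry[OF W1 i]
        weighing_matrix_entry[OF W2 j]] by auto
  have "card (S1 \<inter> S2) + n = k + k + card (row_zeros n W1 i \<inter> row_zeros n W2 j)"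
  proof -
    have "{..<n} - (S1 \<union> S2) = row_zeros n W1 i \<inter> row_zeros n W2 j"
      by (auto simp: S1_def S2_def row_zeros_def)
    moreover have "card S1 = k" "card S2 = k"
      unfolding S1_def S2_def using weighing_matrix_row_weight W1 W2 i j by auto
    ultimately show ?thesis
      using card_Int_add_card_Compl[of S1 n S2] by (auto simp: S1_def S2_def)
  qed
  moreover have "even c \<longleftrightarrow> even (n + z)" if "c + n = k + k + z" for c z :: nat
    using that by presburger
  ultimately have "even (card (S1 \<inter> S2)) \<longleftrightarrow> even (n + card (row_zeros n W1 i \<inter> row_zeros n W2 j))"
    by blast
  with s show ?thesis by blast
qed

lemma weighing_matrix_row_zeros_parity:
  assumes W: "weighing_matrix n k W" and "i < n" "i' < n" "i \<noteq> i'"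
  shows "even (n + card (row_zeros n W i \<inter> row_zeros n W i'))"
proof -
  obtain s :: int where "(\<Sum>l<n. W i l * W i' l) = of_int s"
    and "even s \<longleftrightarrow> even (n + card (row_zeros n W i \<inter> row_zeros n W i'))"
    using row_product_parity[OF W W] assms(2,3) by blast
  moreover have "(\<Sum>l<n. W i l * W i' l) = 0" using W assms(2-4) by (simp add: weighing_matrix_def)
  ultimately show ?thesis by simp
qed

lemma unbiased_odd_overlaps:
  assumes U: "unbiased n (m\<^sup>2) W1 W2" and m: "odd m" and a: "a < n"
  shows "card {b. b < n \<and> odd (n + card (row_zeros n W1 a \<inter> row_zeros n W2 b))} = m\<^sup>2"
proof -
  define M where "M = (\<lambda>i j. (\<Sum>l<n. W1 i l * W2 j l) / real m)"
  have W1: "weighing_matrix n (m\<^sup>2) W1" and W2: "weighing_matrix n (m\<^sup>2) W2"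
    and WM: "weighing_matrix n (m\<^sup>2) M"
    using U by (simp_all add: unbiased_def M_def)
  have m0: "real m \<noteq> 0" using m by (auto intro: Nat.gr0I)
  have "M a b \<noteq> 0 \<longleftrightarrow> odd (n + card (row_zeros n W1 a \<inter> row_zeros n W2 b))" if b: "b < n" for b
  proof -
    obtain s :: int where s: "(\<Sum>l<n. W1 a l * W2 b l) = of_int s"
      and par: "even s \<longleftrightarrow> even (n + card (row_zeros n W1 a \<inter> row_zeros n W2 b))"
      using row_product_parity[OF W1 W2 a b] by blast
    have "M a b = of_int s / real m" using s by (simp add: M_def)
    moreover have "M a b \<in> {1, -1, 0}" using weighing_matrix_entry[OF WM a b] .
    ultimately have "s = int m \<or> s = - int m \<or> s = 0" using m0 by (auto simp: field_simps)
    then have "s \<noteq> 0 \<longleftrightarrow> odd s" using m by auto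
    then show ?thesis using \<open>M a b = of_int s / real m\<close> m0 par by auto
  qed
  then have "{b. b < n \<and> odd (n + card (row_zeros n W1 a \<inter> row_zeros n W2 b))} = {b. b < n \<and> M a b \<noteq> 0}"
    by blast
  then show ?thesis using weighing_matrix_row_weight[OF WM a] by simp
qed

lemma sum_card_row_zeros_Int:
  assumes W1: "weighing_matrix n k W1" and W2: "weighing_matrix n k W2"
    and k: "0 < k" and a: "a < n"
  shows "(\<Sum>b<n. card (row_zeros n W1 a \<inter> row_zeros n W2 b)) = (n - k)\<^sup>2"
proof -
  have "(\<Sum>b<n. card {p \<in> row_zeros n W1 a. W2 b p = 0}) = (n - k) * card (row_zeros n W1 a)"
  proof (rule sum_multicount)
    show "\<forall>p\<in>row_zeros n W1 a. card {b \<in> {..<n}. W2 b p = 0} = n - k"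
      using card_col_zeros[OF W2 k] by (auto simp: row_zeros_def)
  qed simp_all
  moreover have "{p \<in> row_zeros n W1 a. W2 b p = 0} = row_zeros n W1 a \<inter> row_zeros n W2 b" for b
    by (auto simp: row_zeros_def)
  ultimately show ?thesis using card_row_zeros[OF W1 a] by (simp add: power2_eq_square)
qed

lemma weighing_matrix_odd_order_bound:
  assumes W: "weighing_matrix n k W" and k: "0 < k" and n: "odd n" "1 < n"
  shows "n \<le> (n - k)\<^sup>2"
proof -
  let ?Z = "row_zeros n W 0"
  have meet: "?Z \<inter> row_zeros n W i \<noteq> {}" if "0 < i" "i < n" for i
  proof -
    have "even (n + card (?Z \<inter> row_zeros n W i))"
      by (rule weighing_matrix_row_zeros_parity[OF W]) (use that in auto)
    then have "card (?Z \<inter> row_zeros n W i) \<noteq> 0" using n(1) by auto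
    then show ?thesis by auto
  qed
  then have "?Z \<noteq> {}" using n(2) by auto
  have cover: "{..<n} \<subseteq> (\<Union>p\<in>?Z. {i. i < n \<and> W i p = 0})"
  proof
    fix i assume i: "i \<in> {..<n}"
    obtain p where "p \<in> ?Z" "p \<in> row_zeros n W i"
      using meet[of i] \<open>?Z \<noteq> {}\<close> i by (cases "i = 0") auto
    then show "i \<in> (\<Union>p\<in>?Z. {i. i < n \<and> W i p = 0})" using i by (auto simp: row_zeros_def)
  qed
  have "n \<le> card (\<Union>p\<in>?Z. {i. i < n \<and> W i p = 0})"
    using card_mono[OF _ cover] by simp
  also have "\<dots> \<le> (\<Sum>p\<in>?Z. card {i. i < n \<and> W i p = 0})" by (rule card_UN_le) simp
  also have "\<dots> = (\<Sum>p\<in>?Z. n - k)"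
    using card_col_zeros[OF W k] by (intro sum.cong) (auto simp: row_zeros_def)
  also have "\<dots> = (n - k)\<^sup>2" using card_row_zeros[OF W] n(2) by (simp add: power2_eq_square)
  finally show ?thesis .
qed

lemma unbiased_even_order_odd_overlaps:
  assumes U: "unbiased n (m\<^sup>2) W1 W2" and m: "odd m" and n: "even n" and a: "a < n"
  shows "card {b \<in> {..<n}. odd (card (row_zeros n W1 a \<inter> row_zeros n W2 b))} = m\<^sup>2"
    and "(\<Sum>b<n. card (row_zeros n W1 a \<inter> row_zeros n W2 b)) = (n - m\<^sup>2)\<^sup>2"
proof -
  show "card {b \<in> {..<n}. odd (card (row_zeros n W1 a \<inter> row_zeros n W2 b))} = m\<^sup>2"
    using unbiased_odd_overlaps[OF U m a] n by simp
  have "0 < m\<^sup>2" using m by (auto intro: Nat.gr0I)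
  then show "(\<Sum>b<n. card (row_zeros n W1 a \<inter> row_zeros n W2 b)) = (n - m\<^sup>2)\<^sup>2"
    using U a by (intro sum_card_row_zeros_Int) (auto simp: unbiased_def)
qed

lemma unbiased_even_order_bound:
  assumes "unbiased n (m\<^sup>2) W1 W2" and "odd m" and "even n" and "0 < n"
  shows "m\<^sup>2 \<le> (n - m\<^sup>2)\<^sup>2"
  using card_odd_le_sum[of "{..<n}" "\<lambda>b. card (row_zeros n W1 0 \<inter> row_zeros n W2 b)"]
    unbiased_even_order_odd_overlaps[OF assms] by simp

lemma unbiased_extremal_overlap_le_one:
  assumes "unbiased n (m\<^sup>2) W1 W2" and "odd m" and "even n"
    and extremal: "m\<^sup>2 = (n - m\<^sup>2)\<^sup>2" and a: "a < n" and b: "b < n"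
  shows "card (row_zeros n W1 a \<inter> row_zeros n W2 b) \<le> 1"
proof (rule ccontr)
  assume "\<not> ?thesis"
  then show False
    using card_odd_add_two_le_sum[of "{..<n}" b "\<lambda>b. card (row_zeros n W1 a \<inter> row_zeros n W2 b)"]
      unbiased_even_order_odd_overlaps[OF assms(1-3) a] extremal b by simp
qed

locale even_triple_system =
  fixes n :: nat and Z :: "nat \<Rightarrow> nat set"
  assumes block_subset: "b < n \<Longrightarrow> Z b \<subseteq> {..<n}"
    and card_block: "b < n \<Longrightarrow> card (Z b) = 3"
    and even_card_block_Int: "b < n \<Longrightarrow> b' < n \<Longrightarrow> b \<noteq> b' \<Longrightarrow> even (card (Z b \<inter> Z b'))"
    and card_blocks_through: "p < n \<Longrightarrow> card {b. b < n \<and> p \<in> Z b} = 3"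
begin

definition adjacent :: "nat \<Rightarrow> nat \<Rightarrow> bool" where
  "adjacent u v \<longleftrightarrow> u \<noteq> v \<and> (\<exists>b<n. u \<in> Z b \<and> v \<in> Z b)"

lemma adjacent_sym: "adjacent u v \<Longrightarrow> adjacent v u"
  unfolding adjacent_def by blast

lemma adjacent_less: "adjacent u v \<Longrightarrow> u < n \<and> v < n"
  unfolding adjacent_def using block_subset by blast

lemma block_not_subset:
  assumes "b < n" "b' < n" "b \<noteq> b'"
  shows "\<not> Z b \<subseteq> Z b'"
proof
  assume sub: "Z b \<subseteq> Z b'"
  have "finite (Z b')" using card_block[OF assms(2)] card_ge_0_finite by force
  then have "Z b = Z b'" using sub card_block assms(1,2) by (simp add: card_subset_eq)
  then show False using even_card_block_Int[OF assms] card_block[OF assms(1)] by simp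
qed

lemma block_Int_second_point:
  assumes "b < n" "b' < n" "b \<noteq> b'" and "Z b = {x, y, w}" and "x \<in> Z b'"
  shows "y \<in> Z b' \<or> w \<in> Z b'"
proof (rule ccontr)
  assume "\<not> ?thesis"
  then have "Z b \<inter> Z b' = {x}" using assms(4,5) by auto
  then show False using even_card_block_Int[OF assms(1-3)] by simp
qed

lemma third_block_through:
  assumes "p < n" and "b < n" "p \<in> Z b" and "b' < n" "p \<in> Z b'"
  obtains b'' where "b'' < n" "p \<in> Z b''" "b'' \<noteq> b" "b'' \<noteq> b'"
  using card_3_third[OF card_blocks_through[OF assms(1)], of b b'] assms by auto

lemma blocks_through_eq:
  assumes "p < n" and "{b, b', b''} \<subseteq> {e. e < n \<and> p \<in> Z e}"
    and "b \<noteq> b'" "b \<noteq> b''" "b' \<noteq> b''"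
  shows "{e. e < n \<and> p \<in> Z e} = {b, b', b''}"
  using card_3_eq_of_subset[OF card_blocks_through[OF assms(1)] assms(2-5)] .

lemma no_pair_in_three_blocks:
  assumes b: "b < n" "b' < n" "b'' < n" "b \<noteq> b'" "b \<noteq> b''" "b' \<noteq> b''"
    and xy: "{x, y} \<subseteq> Z b \<inter> Z b' \<inter> Z b''" "x \<noteq> y"
  shows False
proof -
  have "x < n" "y < n" using block_subset[OF b(1)] xy(1) by auto
  then have through: "{e. e < n \<and> x \<in> Z e} = {b, b', b''}" "{e. e < n \<and> y \<in> Z e} = {b, b', b''}"
    using blocks_through_eq b xy(1) by auto
  obtain u where u: "Z b = {x, y, u}" "u \<noteq> x" "u \<noteq> y"
    using card_3_eq_with_two[OF card_block[OF b(1)] _ _ xy(2)] xy(1) by auto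
  then have "u < n" using block_subset[OF b(1)] by auto
  then obtain f where f: "f < n" "u \<in> Z f" "f \<noteq> b"
    using third_block_through[OF _ b(1) _ b(1)] u(1) by blast
  have "Z b = {u, x, y}" using u(1) by auto
  then have "x \<in> Z f \<or> y \<in> Z f" using block_Int_second_point[OF b(1) f(1)] f by blast
  then have "f = b' \<or> f = b''" using through f by blast
  then have "Z b \<subseteq> Z f" using u(1) f(2) xy(1) by auto
  then show False using block_not_subset b f by blast
qed

lemma adjacent_trans:
  assumes uz: "adjacent u z" and zv: "adjacent z v" and uv: "u \<noteq> v"
  shows "adjacent u v"
proof (rule ccontr)
  assume nadj: "\<not> adjacent u v"
  obtain b where b: "b < n" "u \<in> Z b" "z \<in> Z b" "u \<noteq> z" using uz unfolding adjacent_def by blast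
  obtain b' where b': "b' < n" "v \<in> Z b'" "z \<in> Z b'" using zv unfolding adjacent_def by blast
  have z: "z < n" using adjacent_less uz by auto
  have v_b: "v \<notin> Z b" and u_b': "u \<notin> Z b'" using nadj b b' uv unfolding adjacent_def by blast+
  then have bb': "b \<noteq> b'" using b(2) by blast
  obtain c where c: "Z b = {z, u, c}" "c \<noteq> z" "c \<noteq> u"
    using card_3_eq_with_two[OF card_block[OF b(1)] b(3,2)] b(4) by auto
  have c_b': "c \<in> Z b'" using block_Int_second_point[OF b(1) b'(1) bb' c(1) b'(3)] u_b' by blast
  have Zb': "Z b' = {z, v, c}"
    using card_3_eq_of_subset[OF card_block[OF b'(1)], of z v c] b' c_b' c(2) v_b c(1) by auto
  obtain b'' where b'': "b'' < n" "z \<in> Z b''" "b'' \<noteq> b" "b'' \<noteq> b'"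
    using third_block_through[OF z b(1,3) b'(1,3)] .
  have "c \<notin> Z b''"
    using no_pair_in_three_blocks[OF b(1) b'(1) b''(1) bb', where x = z and y = c] c c_b' b' b''
    by auto
  then have "u \<in> Z b''" "v \<in> Z b''"
    using block_Int_second_point[OF b(1) b''(1) _ c(1) b''(2)]
      block_Int_second_point[OF b'(1) b''(1) _ Zb' b''(2)] b''(3,4) by auto
  then show False using nadj b''(1) uv unfolding adjacent_def by blast
qed

lemma four_clique_through:
  assumes p: "p < n"
  obtains Q where "p \<in> Q" "card Q = 4" "\<And>u v. u \<in> Q \<Longrightarrow> v \<in> Q \<Longrightarrow> u \<noteq> v \<Longrightarrow> adjacent u v"
proof -
  have "{b. b < n \<and> p \<in> Z b} \<noteq> {}" using card_blocks_through[OF p] by (intro notI) simp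
  then obtain b1 where b1: "b1 < n" "p \<in> Z b1" by blast
  obtain b2 where b2: "b2 < n" "p \<in> Z b2" "b2 \<noteq> b1"
    using third_block_through[OF p b1 b1] by blast
  obtain x y where xy: "Z b1 = {p, x, y}" "x \<noteq> p" "y \<noteq> p" "x \<noteq> y"
    using card_3_eq_with_one[OF card_block[OF b1(1)] b1(2)] by blast
  obtain w where w: "w \<in> Z b2" "w \<notin> Z b1" using block_not_subset[OF b2(1) b1(1) b2(3)] by blast
  have adj: "adjacent p t" if "t \<in> {x, y, w}" for t
    unfolding adjacent_def using that xy w b1 b2 by blast
  show ?thesis
  proof
    show "p \<in> {p, x, y, w}" by simp
    show "card {p, x, y, w} = 4" using xy w by auto
    fix u v assume "u \<in> {p, x, y, w}" "v \<in> {p, x, y, w}" "u \<noteq> v"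
    then show "adjacent u v"
      using adj adjacent_sym adjacent_trans[OF adjacent_sym[OF adj[of u]] adj[of v]] by auto
  qed
qed

definition nbhd :: "nat \<Rightarrow> nat set" where
  "nbhd u = insert u {v. adjacent u v}"

lemma nbhd_subset: "u < n \<Longrightarrow> nbhd u \<subseteq> {..<n}"
  using adjacent_less by (auto simp: nbhd_def)

lemma card_nbhd:
  assumes u: "u < n"
  shows "4 \<le> card (nbhd u)"
proof -
  obtain Q where Q: "u \<in> Q" "card Q = 4" "\<And>x y. x \<in> Q \<Longrightarrow> y \<in> Q \<Longrightarrow> x \<noteq> y \<Longrightarrow> adjacent x y"
    using four_clique_through[OF u] by blast
  then have "Q \<subseteq> nbhd u" using Q(3)[OF Q(1)] by (auto simp: nbhd_def)
  then have "card Q \<le> card (nbhd u)"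
    by (rule card_mono[OF finite_subset[OF nbhd_subset[OF u] finite_lessThan]])
  then show ?thesis using Q(2) by simp
qed

lemma adjacent_if_nbhd_Int:
  assumes "nbhd u \<inter> nbhd v \<noteq> {}" and "u \<noteq> v"
  shows "adjacent u v"
proof -
  obtain t where t: "t = u \<or> adjacent u t" "t = v \<or> adjacent v t"
    using assms(1) by (auto simp: nbhd_def)
  show ?thesis
  proof (cases "t = u")
    case True
    then show ?thesis using t(2) assms(2) adjacent_sym by blast
  next
    case False
    then show ?thesis using t assms(2) adjacent_sym adjacent_trans by blast
  qed
qed

end

lemma even_triple_systems_share_pair:
  assumes "even_triple_system n Z1" and "even_triple_system n Z2" and n: "0 < n" "n < 16"
  shows "\<exists>a<n. \<exists>b<n. 2 \<le> card (Z1 a \<inter> Z2 b)"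
proof -
  interpret S1: even_triple_system n Z1 by fact
  interpret S2: even_triple_system n Z2 by fact
  obtain Q where Q: "0 \<in> Q" "card Q = 4"
    and clique: "\<And>u v. u \<in> Q \<Longrightarrow> v \<in> Q \<Longrightarrow> u \<noteq> v \<Longrightarrow> S1.adjacent u v"
    using S1.four_clique_through[OF n(1)] by blast
  have Q_less: "u < n" if "u \<in> Q" for u
    using n(1) S1.adjacent_less[OF clique[OF Q(1) that]] by (cases "u = 0") auto
  have "\<exists>u\<in>Q. \<exists>v\<in>Q. u \<noteq> v \<and> S2.nbhd u \<inter> S2.nbhd v \<noteq> {}"
  proof (rule ccontr)
    assume "\<not> ?thesis"
    then have "card (\<Union>u\<in>Q. S2.nbhd u) = (\<Sum>u\<in>Q. card (S2.nbhd u))"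
      using Q(2) finite_subset[OF S2.nbhd_subset finite_lessThan] Q_less
      by (intro card_UN_disjoint) (auto intro: card_ge_0_finite)
    also have "\<dots> \<ge> 4 * card Q"
      using sum_mono[of Q "\<lambda>_. 4" "\<lambda>u. card (S2.nbhd u)"] S2.card_nbhd Q_less by simp
    moreover have "card (\<Union>u\<in>Q. S2.nbhd u) \<le> n"
      using S2.nbhd_subset Q_less card_mono[of "{..<n}" "\<Union>u\<in>Q. S2.nbhd u"] by auto
    ultimately show False using Q(2) n(2) by simp
  qed
  then obtain u v where uv: "u \<noteq> v" "S1.adjacent u v" "S2.adjacent u v"
    using clique S2.adjacent_if_nbhd_Int by blast
  then obtain a b where ab: "a < n" "b < n" "{u, v} \<subseteq> Z1 a \<inter> Z2 b"
    unfolding S1.adjacent_def S2.adjacent_def by blast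
  have "finite (Z1 a \<inter> Z2 b)"
    using finite_subset[OF S1.block_subset[OF ab(1)] finite_lessThan] by blast
  then have "card {u, v} \<le> card (Z1 a \<inter> Z2 b)" using ab(3) by (rule card_mono)
  then have "2 \<le> card (Z1 a \<inter> Z2 b)" using uv(1) by simp
  then show ?thesis using ab(1,2) by blast
qed

lemma even_triple_system_row_zeros:
  assumes W: "weighing_matrix n k W" and n: "n = k + 3" "even n"
  shows "even_triple_system n (row_zeros n W)"
proof
  have k: "0 < k" using n by (auto intro: Nat.gr0I)
  fix b b' p
  show "b < n \<Longrightarrow> row_zeros n W b \<subseteq> {..<n}" by (rule row_zeros_subset)
  show "b < n \<Longrightarrow> card (row_zeros n W b) = 3" using card_row_zeros[OF W] n(1) by simp
  show "b < n \<Longrightarrow> b' < n \<Longrightarrow> b \<noteq> b' \<Longrightarrow> even (card (row_zeros n W b \<inter> row_zeros n W b'))"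
    using weighing_matrix_row_zeros_parity[OF W] n(2) by simp
  show "p < n \<Longrightarrow> card {b. b < n \<and> p \<in> row_zeros n W b} = 3"
    using card_col_zeros[OF W k] n(1) by (simp add: row_zeros_def)
qed

lemma no_unbiased_weight_9_below_13:
  assumes n: "0 < n" "n < 13" and U: "unbiased n 9 W1 W2"
  shows False
proof -
  have U3: "unbiased n (3\<^sup>2) W1 W2" and W1: "weighing_matrix n 9 W1" and W2: "weighing_matrix n 9 W2"
    using U by (simp_all add: unbiased_def)
  have "9 \<le> n"
    using weighing_matrix_row_weight[OF W1 n(1)] card_mono[of "{..<n}" "{j. j < n \<and> W1 0 j \<noteq> 0}"]
    by auto
  then consider "n = 9 \<or> n = 11" | "n = 10" | "n = 12" using n(2) by linarith
  then show False
  proof cases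
    case 1
    then show False using weighing_matrix_odd_order_bound[OF W1] by auto
  next
    case 2
    then show False using unbiased_even_order_bound[OF U3] by simp
  next
    case 3
    have S1: "even_triple_system 12 (row_zeros 12 W1)" and S2: "even_triple_system 12 (row_zeros 12 W2)"
      using even_triple_system_row_zeros[OF W1] even_triple_system_row_zeros[OF W2] 3 by simp_all
    have "\<exists>a<12. \<exists>b<12. 2 \<le> card (row_zeros 12 W1 a \<inter> row_zeros 12 W2 b)"
      using even_triple_systems_share_pair[OF S1 S2] by simp
    then obtain a b where "a < 12" "b < 12" "2 \<le> card (row_zeros 12 W1 a \<inter> row_zeros 12 W2 b)"
      by blast
    moreover have "card (row_zeros 12 W1 a \<inter> row_zeros 12 W2 b) \<le> 1"
      by (rule unbiased_extremal_overlap_le_one[OF U3[unfolded 3]]) (use \<open>a < 12\<close> \<open>b < 12\<close> in simp_all)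
    ultimately show False by simp
  qed
qed

definition circulant :: "int list \<Rightarrow> nat \<Rightarrow> nat \<Rightarrow> int" where
  "circulant r i j = r ! ((j + length r - i) mod length r)"

definition A13 :: "nat \<Rightarrow> nat \<Rightarrow> int" where
  "A13 = circulant [1, 1, -1, 1, 1, 1, 0, -1, 0, -1, 1, 0, 0]"

definition B13 :: "nat \<Rightarrow> nat \<Rightarrow> int" where
  "B13 = circulant [1, -1, 1, 1, -1, -1, 0, 0, 1, 1, 0, 1, 0]"

definition C13 :: "nat \<Rightarrow> nat \<Rightarrow> int" where
  "C13 i j = (\<Sum>l<13. A13 i l * B13 j l) div 3"

definition int_weighing_table :: "nat \<Rightarrow> nat \<Rightarrow> (nat \<Rightarrow> nat \<Rightarrow> int) \<Rightarrow> bool" where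
  "int_weighing_table n k A \<longleftrightarrow> list_all (\<lambda>i. list_all (\<lambda>j.
     A i j \<in> {1, -1, 0} \<and> (\<Sum>l<n. A i l * A j l) = (if i = j then int k else 0)) [0..<n]) [0..<n]"

lemma weighing_matrix_of_int_table:
  assumes "int_weighing_table n k A"
  shows "weighing_matrix n k (\<lambda>i j. of_int (A i j))"
  unfolding weighing_matrix_def
proof (intro conjI allI impI)
  fix i j assume ij: "i < n" "j < n"
  then have A: "A i j \<in> {1, -1, 0}" "(\<Sum>l<n. A i l * A j l) = (if i = j then int k else 0)"
    using assms by (auto simp: int_weighing_table_def list_all_iff)
  then show "real_of_int (A i j) \<in> {1, -1, 0}" by auto
  have "(\<Sum>l<n. real_of_int (A i l) * real_of_int (A j l)) = of_int (\<Sum>l<n. A i l * A j l)" by simp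
  then show "(\<Sum>l<n. real_of_int (A i l) * real_of_int (A j l)) = (if i = j then real k else 0)"
    using A(2) by simp
qed

lemma weighing_matrix_cong:
  "(\<And>i j. i < n \<Longrightarrow> j < n \<Longrightarrow> F i j = G i j) \<Longrightarrow> weighing_matrix n k F = weighing_matrix n k G"
  unfolding weighing_matrix_def by (auto intro!: sum.cong)

lemma unbiased_13_9: "unbiased 13 9 (\<lambda>i j. of_int (A13 i j)) (\<lambda>i j. of_int (B13 i j))"
proof -
  have tables: "int_weighing_table 13 9 A13" "int_weighing_table 13 9 B13" "int_weighing_table 13 9 C13"
    unfolding int_weighing_table_def C13_def A13_def B13_def circulant_def by code_simp+
  have "list_all (\<lambda>i. list_all (\<lambda>j. (\<Sum>l<13. A13 i l * B13 j l) = 3 * C13 i j) [0..<13]) [0..<13]"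
    unfolding C13_def A13_def B13_def circulant_def by code_simp
  then have "(\<Sum>l<13. A13 i l * B13 j l) = 3 * C13 i j" if "i < 13" "j < 13" for i j
    using that by (simp add: list_all_iff)
  then have quotient: "(\<Sum>l<13. real_of_int (A13 i l) * real_of_int (B13 j l)) / 3 = real_of_int (C13 i j)"
    if "i < 13" "j < 13" for i j
    using that by (simp flip: of_int_mult of_int_sum)
  have "weighing_matrix 13 9 (\<lambda>i j. (\<Sum>l<13. real_of_int (A13 i l) * real_of_int (B13 j l)) / 3)
      = weighing_matrix 13 9 (\<lambda>i j. real_of_int (C13 i j))"
    by (rule weighing_matrix_cong) (rule quotient)
  then have "weighing_matrix 13 9 (\<lambda>i j. (\<Sum>l<13. real_of_int (A13 i l) * real_of_int (B13 j l)) / 3)"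
    using weighing_matrix_of_int_table[OF tables(3)] by simp
  moreover have "sqrt (real 9) = 3" by (simp add: real_sqrt_eq_iff)
  ultimately show ?thesis
    using weighing_matrix_of_int_table[OF tables(1)] weighing_matrix_of_int_table[OF tables(2)]
    by (simp add: unbiased_def)
qed

theorem corollary6p3:
  shows "(\<exists>W1 W2. unbiased 13 9 W1 W2) \<and>
         (\<forall>n::nat. 1 \<le> n \<and> n < 13 \<longrightarrow> \<not> (\<exists>W1 W2. unbiased n 9 W1 W2))"
proof (intro conjI allI impI notI)
  show "\<exists>W1 W2. unbiased 13 9 W1 W2" using unbiased_13_9 by blast
next
  fix n :: nat assume n: "1 \<le> n \<and> n < 13" and "\<exists>W1 W2. unbiased n 9 W1 W2"
  then obtain W1 W2 where "unbiased n 9 W1 W2" by blast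
  moreover have "0 < n" "n < 13" using n by simp_all
  ultimately show False using no_unbiased_weight_9_below_13 by blast
qed

end
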